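(* Let $\mathbb{Z}_{(p_n)}$ be an odometer with scale $(p_n)$. Then $\operatorname{Aut}^{(\infty)}(\mathbb{Z}_{(p_n)},+\mathbf{1})$ is isomorphic to the direct limit of a sequence $$\mathbb{Z}_{(p_n)}\xrightarrow{j_0}\mathbb{Z}_{(p_{n+1}/p_1)}^{p_1}\rtimes\operatorname{Sym}(p_1)\xrightarrow{j_1}\mathbb{Z}_{(p_{n+2}/p_2)}^{p_2}\rtimes\operatorname{Sym}(p_2)\xrightarrow{j_2}\mathbb{Z}_{(p_{n+3}/p_3)}^{p_3}\rtimes\operatorname{Sym}(p_3)\xrightarrow{j_3}\cdots$$ where the maps $j_k$ are injective group homomorphisms.
   Context: A scale is a sequence $(p_n)$ of positive integers with $p_n\mid p_{n+1}$, not eventually constant. The odometer is $\mathbb{Z}_{(p_n)}=\{(x_n)\in\prod_n\mathbb{Z}/p_n\mathbb{Z}: x_{n+1}\equiv x_n\bmod p_n\}$ with translation by $\mathbf{1}=(1,1,\dots)$; $\mathbb{Z}_{(p_{n+k}/p_k)}$ denotes the odometer with scale $(p_{n+k}/p_k)_{n\ge1}$. $\operatorname{Aut}(X,T)$ is the group of homeomorphisms commuting with $T$ and $\operatorname{Aut}^{(\infty)}(X,T)=\bigcup_{n\ge1}\operatorname{Aut}(X,T^n)\subseteq\operatorname{Homeo}(X)$. In $H^{p}\rtimes\operatorname{Sym}(p)$ the symmetric group acts by permuting coordinates. *)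

theory Defs
  imports "HOL-Analysis.Analysis" "HOL-Algebra.Group"
begin

text \<open>Scales. The paper's scale (p_1, p_2, ...) is represented 0-based:
  Isabelle's p i stands for p_(i+1). The convention p_0 = 1 is used for the
  zeroth term of the direct system.\<close>

definition is_scale :: "(nat \<Rightarrow> nat) \<Rightarrow> bool" where
  "is_scale p \<longleftrightarrow> (\<forall>n. 0 < p n) \<and> (\<forall>n. p n dvd p (Suc n)) \<and>
     \<not> (\<exists>N. \<forall>n\<ge>N. p n = p N)"

text \<open>The odometer Z_(q): compatible sequences x with x n in Z/(q n)Z.\<close>

definition odo :: "(nat \<Rightarrow> nat) \<Rightarrow> (nat \<Rightarrow> nat) set" where
  "odo q = {x. \<forall>n. x n < q n \<and> x (Suc n) mod q n = x n}"

definition odo_top :: "(nat \<Rightarrow> nat) \<Rightarrow> (nat \<Rightarrow> nat) topology" where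
  "odo_top q = subtopology (product_topology (\<lambda>n. discrete_topology {..<q n}) UNIV) (odo q)"

definition odo_T :: "(nat \<Rightarrow> nat) \<Rightarrow> (nat \<Rightarrow> nat) \<Rightarrow> (nat \<Rightarrow> nat)" where
  "odo_T q x = (\<lambda>n. (x n + 1) mod q n)"

text \<open>The group Aut^(infinity)(Z_(q), +1) = union over m \<ge> 1 of Aut(Z_(q), T^m),
  as a subgroup of Homeo(Z_(q)) under composition. Maps are taken extensional
  (undefined outside the odometer).\<close>

definition aut_inf :: "(nat \<Rightarrow> nat) \<Rightarrow> ((nat \<Rightarrow> nat) \<Rightarrow> (nat \<Rightarrow> nat)) monoid" where
  "aut_inf q = \<lparr> carrier = {f \<in> extensional (odo q).
        homeomorphic_map (odo_top q) (odo_top q) f \<and>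
        (\<exists>m\<ge>1. \<forall>x\<in>odo q. f ((odo_T q ^^ m) x) = (odo_T q ^^ m) (f x))},
      mult = (\<lambda>f g. compose (odo q) f g),
      one = restrict id (odo q) \<rparr>"

definition odo_add :: "(nat \<Rightarrow> nat) \<Rightarrow> (nat \<Rightarrow> nat) \<Rightarrow> (nat \<Rightarrow> nat) \<Rightarrow> (nat \<Rightarrow> nat)" where
  "odo_add q x y = (\<lambda>n. (x n + y n) mod q n)"

definition odo_grp :: "(nat \<Rightarrow> nat) \<Rightarrow> (nat \<Rightarrow> nat) monoid" where
  "odo_grp q = \<lparr> carrier = odo q, mult = odo_add q, one = (\<lambda>n. 0) \<rparr>"

text \<open>The semidirect product Z_(q)^m \<rtimes> Sym(m), Sym(m) permuting the m
  coordinates (indexed by {..<m}):  (v,s)(w,t) = (v + s.w, s o t),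
  where (s.w)_i = w_(s^-1 i).\<close>

definition wr_grp :: "(nat \<Rightarrow> nat) \<Rightarrow> nat \<Rightarrow> ((nat \<Rightarrow> nat \<Rightarrow> nat) \<times> (nat \<Rightarrow> nat)) monoid" where
  "wr_grp q m = \<lparr> carrier = {(v, s). v \<in> {..<m} \<rightarrow>\<^sub>E odo q \<and> s permutes {..<m}},
      mult = (\<lambda>(v, s) (w, t). (\<lambda>i\<in>{..<m}. odo_add q (v i) (w (inv_into UNIV s i)), s \<circ> t)),
      one = (\<lambda>i\<in>{..<m}. (\<lambda>n. 0), id) \<rparr>"

text \<open>Copies of groups inside a sum type, so that all groups of the direct
  system live on one type.\<close>

definition inl_grp :: "'a monoid \<Rightarrow> ('a + 'b) monoid" where
  "inl_grp G = \<lparr> carrier = Inl ` carrier G,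
      mult = (\<lambda>a b. Inl (projl a \<otimes>\<^bsub>G\<^esub> projl b)), one = Inl \<one>\<^bsub>G\<^esub> \<rparr>"

definition inr_grp :: "'b monoid \<Rightarrow> ('a + 'b) monoid" where
  "inr_grp G = \<lparr> carrier = Inr ` carrier G,
      mult = (\<lambda>a b. Inr (projr a \<otimes>\<^bsub>G\<^esub> projr b)), one = Inr \<one>\<^bsub>G\<^esub> \<rparr>"

text \<open>The groups of the direct system: term 0 is Z_(p_n); term k \<ge> 1 is
  Z_(p_(n+k)/p_k)^(p_k) \<rtimes> Sym(p_k). In 0-based indexing p_k = p (k-1) and
  the shifted scale is i \<mapsto> p (i+k) div p (k-1).\<close>

definition shift_scale :: "(nat \<Rightarrow> nat) \<Rightarrow> nat \<Rightarrow> (nat \<Rightarrow> nat)" where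
  "shift_scale p k = (\<lambda>i. p (i + k) div p (k - 1))"

definition seq_grp :: "(nat \<Rightarrow> nat) \<Rightarrow> nat \<Rightarrow>
    ((nat \<Rightarrow> nat) + ((nat \<Rightarrow> nat \<Rightarrow> nat) \<times> (nat \<Rightarrow> nat))) monoid" where
  "seq_grp p k = (if k = 0 then inl_grp (odo_grp p)
                  else inr_grp (wr_grp (shift_scale p k) (p (k - 1))))"

primrec dl_map :: "(nat \<Rightarrow> 'a \<Rightarrow> 'a) \<Rightarrow> nat \<Rightarrow> nat \<Rightarrow> 'a \<Rightarrow> 'a" where
  "dl_map j k 0 = id"
| "dl_map j k (Suc d) = j (k + d) \<circ> dl_map j k d"

definition dl_rel :: "(nat \<Rightarrow> 'a monoid) \<Rightarrow> (nat \<Rightarrow> 'a \<Rightarrow> 'a) \<Rightarrow> ((nat \<times> 'a) \<times> (nat \<times> 'a)) set" where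
  "dl_rel G j = {((k, x), (l, y)). x \<in> carrier (G k) \<and> y \<in> carrier (G l) \<and>
      (\<exists>m. k \<le> m \<and> l \<le> m \<and> dl_map j k (m - k) x = dl_map j l (m - l) y)}"

definition dirlim :: "(nat \<Rightarrow> 'a monoid) \<Rightarrow> (nat \<Rightarrow> 'a \<Rightarrow> 'a) \<Rightarrow> (nat \<times> 'a) set monoid" where
  "dirlim G j = \<lparr> carrier = (SIGMA k:UNIV. carrier (G k)) // dl_rel G j,
      mult = (\<lambda>A B. let (k, x) = (SOME a. a \<in> A); (l, y) = (SOME b. b \<in> B); m = max k l
                    in dl_rel G j `` {(m, dl_map j k (m - k) x \<otimes>\<^bsub>G m\<^esub> dl_map j l (m - l) y)}),
      one = dl_rel G j `` {(0, \<one>\<^bsub>G 0\<^esub>)} \<rparr>"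

end

theory Submission
  imports Defs
begin

text \<open>
  Every f in Aut^(\<infinity>) commutes with some power T^M. Being continuous, f then commutes
  with translation by every element of the closure of M\<int>, and this closure contains p_K once
  gcd(M, p_N) has stabilised. Hence Aut^(\<infinity>) is the increasing union of the subgroups
  Aut(\<int>_(p_n), T^(p_k)).

  Writing x = a + p_k y with a < p_k identifies the odometer with {0..<p_k} \<times> \<int>_(p_(n+k)/p_k).
  A homeomorphism commuting with T^(p_k) commutes with translation by p_k \<int>_(p_n), so it permutes
  the digits a and translates the y-part by an amount depending only on a: this is exactly the
  action of the wreath product \<int>_(p_(n+k)/p_k)^(p_k) \<rtimes> Sym(p_k). Finally, an increasing union
  of subgroups H_k \<cong> G_k is the direct limit of the G_k along the maps induced by the inclusions.
\<close>

section \<open>Direct limits of increasing unions\<close>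

locale increasing_union_iso =
  fixes G :: "nat \<Rightarrow> 'a monoid" and U :: "'b monoid" and H :: "nat \<Rightarrow> 'b set"
    and \<phi> :: "nat \<Rightarrow> 'a \<Rightarrow> 'b"
  assumes mult_closed: "\<And>k x y. x \<in> carrier (G k) \<Longrightarrow> y \<in> carrier (G k) \<Longrightarrow>
      x \<otimes>\<^bsub>G k\<^esub> y \<in> carrier (G k)"
    and iso: "\<And>k. \<phi> k \<in> iso (G k) (U\<lparr>carrier := H k\<rparr>)"
    and H_mono: "\<And>k. H k \<subseteq> H (Suc k)"
    and carrier_eq: "carrier U = (\<Union>k. H k)"
begin

lemma \<phi>_bij: "bij_betw (\<phi> k) (carrier (G k)) (H k)"
  using iso[of k] by (simp add: iso_def)

lemma \<phi>_mult: "x \<in> carrier (G k) \<Longrightarrow> y \<in> carrier (G k) \<Longrightarrow>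
    \<phi> k (x \<otimes>\<^bsub>G k\<^esub> y) = \<phi> k x \<otimes>\<^bsub>U\<^esub> \<phi> k y"
  using iso[of k] by (simp add: iso_def hom_def)

lemma \<phi>_in_H: "x \<in> carrier (G k) \<Longrightarrow> \<phi> k x \<in> H k"
  using \<phi>_bij bij_betwE by blast

lemma \<phi>_inject: "x \<in> carrier (G k) \<Longrightarrow> y \<in> carrier (G k) \<Longrightarrow> \<phi> k x = \<phi> k y \<longleftrightarrow> x = y"
  using \<phi>_bij[of k] by (auto simp: bij_betw_def inj_on_def)

lemma H_obtain:
  assumes "u \<in> H k"
  obtains x where "x \<in> carrier (G k)" "\<phi> k x = u"
proof -
  have "u \<in> \<phi> k ` carrier (G k)" using assms \<phi>_bij[of k] by (simp add: bij_betw_def)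
  then show ?thesis using that by blast
qed

definition connect :: "nat \<Rightarrow> 'a \<Rightarrow> 'a" where
  "connect k x = inv_into (carrier (G (Suc k))) (\<phi> (Suc k)) (\<phi> k x)"

lemma \<phi>_in_image_Suc:
  assumes "x \<in> carrier (G k)"
  shows "\<phi> k x \<in> \<phi> (Suc k) ` carrier (G (Suc k))"
proof -
  have "\<phi> k x \<in> H (Suc k)" using \<phi>_in_H[OF assms] H_mono by blast
  then show ?thesis using \<phi>_bij[of "Suc k"] by (simp add: bij_betw_def)
qed

lemma connect_closed: "x \<in> carrier (G k) \<Longrightarrow> connect k x \<in> carrier (G (Suc k))"
  unfolding connect_def by (rule inv_into_into[OF \<phi>_in_image_Suc])

lemma \<phi>_connect: "x \<in> carrier (G k) \<Longrightarrow> \<phi> (Suc k) (connect k x) = \<phi> k x"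
  unfolding connect_def by (rule f_inv_into_f[OF \<phi>_in_image_Suc])

lemma connect_hom: "connect k \<in> hom (G k) (G (Suc k))"
proof (rule homI)
  fix x y assume x: "x \<in> carrier (G k)" and y: "y \<in> carrier (G k)"
  have "\<phi> (Suc k) (connect k (x \<otimes>\<^bsub>G k\<^esub> y)) = \<phi> (Suc k) (connect k x \<otimes>\<^bsub>G (Suc k)\<^esub> connect k y)"
    using connect_closed \<phi>_connect x y mult_closed by (simp add: \<phi>_mult)
  then show "connect k (x \<otimes>\<^bsub>G k\<^esub> y) = connect k x \<otimes>\<^bsub>G (Suc k)\<^esub> connect k y"
    using connect_closed x y mult_closed by (simp add: \<phi>_inject)
qed (rule connect_closed)

lemma inj_on_connect: "inj_on (connect k) (carrier (G k))"
proof (rule inj_onI)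
  fix x y assume x: "x \<in> carrier (G k)" and y: "y \<in> carrier (G k)"
    and "connect k x = connect k y"
  then have "\<phi> k x = \<phi> k y" using \<phi>_connect[OF x] \<phi>_connect[OF y] by metis
  then show "x = y" using \<phi>_inject[OF x y] by simp
qed

lemma dl_map_connect:
  assumes "x \<in> carrier (G k)"
  shows "dl_map connect k d x \<in> carrier (G (k + d)) \<and> \<phi> (k + d) (dl_map connect k d x) = \<phi> k x"
proof (induction d)
  case (Suc d)
  then show ?case
    using connect_closed[of "dl_map connect k d x" "k + d"] \<phi>_connect[of "dl_map connect k d x" "k + d"]
    by simp
qed (simp add: assms)

lemma dl_rel_iff:
  "((k, x), (l, y)) \<in> dl_rel G connect \<longleftrightarrow>
     x \<in> carrier (G k) \<and> y \<in> carrier (G l) \<and> \<phi> k x = \<phi> l y"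
proof
  assume "((k, x), (l, y)) \<in> dl_rel G connect"
  then obtain n where x: "x \<in> carrier (G k)" and y: "y \<in> carrier (G l)" and "k \<le> n" "l \<le> n"
    and eq: "dl_map connect k (n - k) x = dl_map connect l (n - l) y"
    by (auto simp: dl_rel_def)
  then show "x \<in> carrier (G k) \<and> y \<in> carrier (G l) \<and> \<phi> k x = \<phi> l y"
    using dl_map_connect[OF x, of "n - k"] dl_map_connect[OF y, of "n - l"] by simp
next
  assume "x \<in> carrier (G k) \<and> y \<in> carrier (G l) \<and> \<phi> k x = \<phi> l y"
  then have x: "x \<in> carrier (G k)" and y: "y \<in> carrier (G l)" and eq: "\<phi> k x = \<phi> l y" by auto
  define n where "n = max k l"
  have kl: "k \<le> n" "l \<le> n" by (simp_all add: n_def)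
  have x': "dl_map connect k (n - k) x \<in> carrier (G n)" "\<phi> n (dl_map connect k (n - k) x) = \<phi> k x"
    using dl_map_connect[OF x, of "n - k"] kl by simp_all
  have y': "dl_map connect l (n - l) y \<in> carrier (G n)" "\<phi> n (dl_map connect l (n - l) y) = \<phi> l y"
    using dl_map_connect[OF y, of "n - l"] kl by simp_all
  have "dl_map connect k (n - k) x = dl_map connect l (n - l) y"
    using \<phi>_inject[OF x'(1) y'(1)] x'(2) y'(2) eq by simp
  then show "((k, x), (l, y)) \<in> dl_rel G connect"
    using x y kl unfolding dl_rel_def by blast
qed

definition fibre :: "'b \<Rightarrow> (nat \<times> 'a) set" where
  "fibre u = {(k, x). x \<in> carrier (G k) \<and> \<phi> k x = u}"

lemma dl_class_eq: "x \<in> carrier (G k) \<Longrightarrow> dl_rel G connect `` {(k, x)} = fibre (\<phi> k x)"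
  by (auto simp: fibre_def dl_rel_iff)

lemma fibre_nonempty:
  assumes "u \<in> carrier U"
  shows "(SOME a. a \<in> fibre u) \<in> fibre u"
proof -
  obtain k where "u \<in> H k" using assms carrier_eq by blast
  then obtain x where "x \<in> carrier (G k)" "\<phi> k x = u" by (rule H_obtain)
  then have "(k, x) \<in> fibre u" by (simp add: fibre_def)
  then show ?thesis by (rule someI)
qed

lemma carrier_dirlim: "carrier (dirlim G connect) = fibre ` carrier U"
proof (intro equalityI subsetI)
  fix A assume "A \<in> carrier (dirlim G connect)"
  then obtain k x where x: "x \<in> carrier (G k)" and A: "A = dl_rel G connect `` {(k, x)}"
    by (auto simp: dirlim_def quotient_def)
  show "A \<in> fibre ` carrier U" using A dl_class_eq[OF x] \<phi>_in_H[OF x] carrier_eq by blast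
next
  fix A assume "A \<in> fibre ` carrier U"
  then obtain u k where A: "A = fibre u" and u: "u \<in> H k" using carrier_eq by blast
  from u obtain x where x: "x \<in> carrier (G k)" "\<phi> k x = u" by (rule H_obtain)
  have "dl_rel G connect `` {(k, x)} \<in> carrier (dirlim G connect)"
    using x by (auto simp: dirlim_def intro!: quotientI)
  then show "A \<in> carrier (dirlim G connect)" using A dl_class_eq[OF x(1)] x(2) by simp
qed

lemma fibre_mult:
  assumes u: "u \<in> carrier U" and v: "v \<in> carrier U"
  shows "fibre (u \<otimes>\<^bsub>U\<^esub> v) = fibre u \<otimes>\<^bsub>dirlim G connect\<^esub> fibre v"
proof -
  obtain k x where kx: "(SOME a. a \<in> fibre u) = (k, x)" by fastforce
  obtain l y where ly: "(SOME a. a \<in> fibre v) = (l, y)" by fastforce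
  have x: "x \<in> carrier (G k)" "\<phi> k x = u" using fibre_nonempty[OF u] kx by (simp_all add: fibre_def)
  have y: "y \<in> carrier (G l)" "\<phi> l y = v" using fibre_nonempty[OF v] ly by (simp_all add: fibre_def)
  define n where "n = max k l"
  define x' where "x' = dl_map connect k (n - k) x"
  define y' where "y' = dl_map connect l (n - l) y"
  have x': "x' \<in> carrier (G n)" "\<phi> n x' = u"
    using dl_map_connect[OF x(1), of "n - k"] x(2) by (simp_all add: x'_def n_def)
  have y': "y' \<in> carrier (G n)" "\<phi> n y' = v"
    using dl_map_connect[OF y(1), of "n - l"] y(2) by (simp_all add: y'_def n_def)
  have "fibre u \<otimes>\<^bsub>dirlim G connect\<^esub> fibre v = dl_rel G connect `` {(n, x' \<otimes>\<^bsub>G n\<^esub> y')}"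
    by (simp add: dirlim_def kx ly Let_def n_def x'_def y'_def)
  also have "\<dots> = fibre (u \<otimes>\<^bsub>U\<^esub> v)"
    using dl_class_eq[OF mult_closed[OF x'(1) y'(1)]] \<phi>_mult[OF x'(1) y'(1)] x'(2) y'(2) by simp
  finally show ?thesis by simp
qed

lemma fibre_iso: "fibre \<in> iso U (dirlim G connect)"
proof (rule isoI)
  show "fibre \<in> hom U (dirlim G connect)"
    using carrier_dirlim fibre_mult by (auto intro!: homI)
  have "inj_on fibre (carrier U)"
  proof (rule inj_onI)
    fix u v assume u: "u \<in> carrier U" and "v \<in> carrier U" and eq: "fibre u = fibre v"
    have "(SOME a. a \<in> fibre u) \<in> fibre v" using fibre_nonempty[OF u] eq by simp
    then show "u = v" using fibre_nonempty[OF u] by (auto simp: fibre_def)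
  qed
  then show "bij_betw fibre (carrier U) (carrier (dirlim G connect))"
    by (simp add: bij_betw_def carrier_dirlim)
qed

end

lemma iso_dirlim_of_increasing_union:
  fixes G :: "nat \<Rightarrow> 'a monoid" and U :: "'b monoid"
  assumes "\<And>k x y. x \<in> carrier (G k) \<Longrightarrow> y \<in> carrier (G k) \<Longrightarrow> x \<otimes>\<^bsub>G k\<^esub> y \<in> carrier (G k)"
    and iso: "\<And>k. G k \<cong> U\<lparr>carrier := H k\<rparr>"
    and "\<And>k. H k \<subseteq> H (Suc k)" and "carrier U = (\<Union>k. H k)"
  shows "\<exists>j. (\<forall>k. j k \<in> hom (G k) (G (Suc k)) \<and> inj_on (j k) (carrier (G k))) \<and>
             U \<cong> dirlim G j"
proof -
  have "\<forall>k. \<exists>\<phi>. \<phi> \<in> iso (G k) (U\<lparr>carrier := H k\<rparr>)"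
    using iso by (simp add: is_iso_def ex_in_conv)
  then obtain \<phi> where "\<forall>k. \<phi> k \<in> iso (G k) (U\<lparr>carrier := H k\<rparr>)"
    by (auto dest: choice)
  then interpret increasing_union_iso G U H \<phi>
    using assms by unfold_locales blast+
  show ?thesis
    using connect_hom inj_on_connect fibre_iso by (blast intro: is_isoI)
qed

section \<open>Arithmetic on the odometer\<close>

definition dvd_chain :: "(nat \<Rightarrow> nat) \<Rightarrow> bool" where
  "dvd_chain q \<longleftrightarrow> (\<forall>n. 0 < q n) \<and> (\<forall>n. q n dvd q (Suc n))"

lemma is_scale_imp_dvd_chain: "is_scale p \<Longrightarrow> dvd_chain p"
  by (simp add: is_scale_def dvd_chain_def)

lemma dvd_chain_pos: "dvd_chain q \<Longrightarrow> 0 < q n"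
  by (simp add: dvd_chain_def)

lemma dvd_chain_dvd:
  assumes "dvd_chain q" "n \<le> N"
  shows "q n dvd q N"
  using assms(2)
proof (induction N rule: dec_induct)
  case (step N)
  then show ?case
    using assms(1) dvd_trans unfolding dvd_chain_def by blast
qed simp

lemma odo_less: "x \<in> odo q \<Longrightarrow> x n < q n"
  by (simp add: odo_def)

lemma odoI: "(\<And>n. x n < q n) \<Longrightarrow> (\<And>n. x (Suc n) mod q n = x n) \<Longrightarrow> x \<in> odo q"
  by (simp add: odo_def)

lemma odo_mod:
  assumes q: "dvd_chain q" and x: "x \<in> odo q" and "n \<le> N"
  shows "x N mod q n = x n"
  using assms(3)
proof (induction N rule: dec_induct)
  case base
  then show ?case using odo_less[OF x] by simp
next
  case (step N)
  have "x (Suc N) mod q n = x (Suc N) mod q N mod q n"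
    using dvd_chain_dvd[OF q step(1)] by (simp add: mod_mod_cancel)
  then show ?case using x step.IH by (simp add: odo_def)
qed

lemma odo_zero: "dvd_chain q \<Longrightarrow> (\<lambda>n. 0) \<in> odo q"
  by (rule odoI) (simp_all add: dvd_chain_pos)

lemma odo_add_closed:
  assumes q: "dvd_chain q" and "x \<in> odo q" "y \<in> odo q"
  shows "odo_add q x y \<in> odo q"
proof (rule odoI)
  fix n
  show "odo_add q x y n < q n" using dvd_chain_pos[OF q] by (simp add: odo_add_def)
  have "q n dvd q (Suc n)" using q by (simp add: dvd_chain_def)
  then have "odo_add q x y (Suc n) mod q n = (x (Suc n) mod q n + y (Suc n) mod q n) mod q n"
    by (simp add: odo_add_def mod_mod_cancel mod_add_eq)
  then show "odo_add q x y (Suc n) mod q n = odo_add q x y n"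
    using assms(2,3) by (simp add: odo_def odo_add_def)
qed

lemma odo_add_assoc: "odo_add q (odo_add q x y) z = odo_add q x (odo_add q y z)"
  by (simp add: odo_add_def mod_add_left_eq mod_add_right_eq add.assoc)

lemma odo_add_commute: "odo_add q x y = odo_add q y x"
  by (simp add: odo_add_def add.commute)

lemma odo_add_zero_right: "x \<in> odo q \<Longrightarrow> odo_add q x (\<lambda>n. 0) = x"
  by (simp add: odo_add_def odo_less fun_eq_iff)

lemma odo_add_zero_left: "x \<in> odo q \<Longrightarrow> odo_add q (\<lambda>n. 0) x = x"
  by (simp add: odo_add_def odo_less fun_eq_iff)

definition odo_neg :: "(nat \<Rightarrow> nat) \<Rightarrow> (nat \<Rightarrow> nat) \<Rightarrow> (nat \<Rightarrow> nat)" where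
  "odo_neg q x = (\<lambda>n. nat (- int (x n) mod int (q n)))"

lemma odo_neg_closed:
  assumes q: "dvd_chain q" and x: "x \<in> odo q"
  shows "odo_neg q x \<in> odo q"
proof (rule odoI)
  fix n
  show "odo_neg q x n < q n"
    using dvd_chain_pos[OF q] by (simp add: odo_neg_def nat_less_iff)
  define A where "A = - int (x (Suc n)) mod int (q (Suc n))"
  have "0 \<le> A" using dvd_chain_pos[OF q] by (simp add: A_def)
  then have "odo_neg q x (Suc n) mod q n = nat (A mod int (q n))"
    by (simp add: odo_neg_def A_def nat_mod_distrib)
  also have "A mod int (q n) = - int (x (Suc n)) mod int (q n)"
    using q by (simp add: A_def dvd_chain_def mod_mod_cancel)
  also have "\<dots> = - (int (x (Suc n)) mod int (q n)) mod int (q n)"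
    by (simp only: mod_minus_eq)
  also have "\<dots> = - int (x n) mod int (q n)"
    using x by (simp add: odo_def flip: zmod_int)
  finally show "odo_neg q x (Suc n) mod q n = odo_neg q x n"
    by (simp add: odo_neg_def)
qed

lemma odo_add_neg_left:
  assumes "x \<in> odo q"
  shows "odo_add q (odo_neg q x) x = (\<lambda>n. 0)"
proof
  fix n
  have "0 < q n" using odo_less[OF assms, of n] by simp
  then have "int (odo_add q (odo_neg q x) x n) = (- int (x n) mod int (q n) + int (x n)) mod int (q n)"
    by (simp add: odo_add_def odo_neg_def zmod_int)
  also have "\<dots> = 0" by (simp add: mod_add_left_eq)
  finally show "odo_add q (odo_neg q x) x n = 0" by simp
qed

lemma odo_add_neg_right: "x \<in> odo q \<Longrightarrow> odo_add q x (odo_neg q x) = (\<lambda>n. 0)"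
  using odo_add_neg_left odo_add_commute by metis

definition odo_const :: "(nat \<Rightarrow> nat) \<Rightarrow> nat \<Rightarrow> (nat \<Rightarrow> nat)" where
  "odo_const q k = (\<lambda>n. k mod q n)"

lemma odo_const_closed: "dvd_chain q \<Longrightarrow> odo_const q k \<in> odo q"
  by (rule odoI) (auto simp: odo_const_def dvd_chain_def mod_mod_cancel)

lemma odo_T_pow:
  assumes "x \<in> odo q"
  shows "(odo_T q ^^ k) x = odo_add q x (odo_const q k)"
proof (induction k)
  case 0
  show ?case using odo_add_zero_right[OF assms] by (simp add: odo_const_def)
next
  case (Suc k)
  then show ?case
    by (simp add: odo_T_def odo_add_def odo_const_def fun_eq_iff mod_add_right_eq mod_Suc_eq)
qed

lemma odo_T_pow_closed: "dvd_chain q \<Longrightarrow> x \<in> odo q \<Longrightarrow> (odo_T q ^^ k) x \<in> odo q"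
  by (simp add: odo_T_pow odo_add_closed odo_const_closed)

section \<open>Continuous maps of the odometer\<close>

lemma topspace_odo_top [simp]: "topspace (odo_top q) = odo q"
  by (auto simp: odo_top_def odo_less)

lemma continuous_map_odo_top_funspace:
  "continuous_map (odo_top q) (odo_top q) f \<Longrightarrow> x \<in> odo q \<Longrightarrow> f x \<in> odo q"
  using continuous_map_funspace by fastforce

lemma continuous_map_odo_top_local:
  assumes f: "continuous_map (odo_top q) (odo_top q) f" and q: "dvd_chain q" and z: "z \<in> odo q"
  shows "\<exists>N. \<forall>w\<in>odo q. w N = z N \<longrightarrow> f w n = f z n"
proof -
  let ?P = "product_topology (\<lambda>n. discrete_topology {..<q n}) UNIV"
  have "continuous_map (odo_top q) ?P f"
    using f unfolding odo_top_def using continuous_map_into_fulltopology by blast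
  then have "continuous_map (odo_top q) (discrete_topology {..<q n}) (\<lambda>x. f x n)"
    by (simp add: continuous_map_componentwise_UNIV)
  moreover have "f z n < q n"
    using odo_less continuous_map_odo_top_funspace[OF f z] by blast
  ultimately have "openin (odo_top q) {x \<in> odo q. f x n = f z n}"
    using openin_continuous_map_preimage[of _ _ _ "{f z n}"] by fastforce
  then obtain T where T: "openin ?P T" and S: "{x \<in> odo q. f x n = f z n} = T \<inter> odo q"
    unfolding odo_top_def openin_subtopology by auto
  moreover have "z \<in> T" using S z by blast
  ultimately obtain U where fin: "finite {i. U i \<noteq> {..<q i}}"
    and zU: "z \<in> Pi\<^sub>E UNIV U" and UT: "Pi\<^sub>E UNIV U \<subseteq> T"
    unfolding openin_product_topology_alt by auto
  obtain N where N: "\<And>i. U i \<noteq> {..<q i} \<Longrightarrow> i \<le> N"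
    using fin finite_nat_set_iff_bounded_le by auto
  have "f w n = f z n" if w: "w \<in> odo q" "w N = z N" for w
  proof -
    have "w i \<in> U i" for i
    proof (cases "U i = {..<q i}")
      case True
      then show ?thesis using w odo_less by auto
    next
      case False
      then have "w i = z i" using odo_mod[OF q w(1) N] odo_mod[OF q z N] w(2) by metis
      then show ?thesis using zU by auto
    qed
    then show ?thesis using UT S w by blast
  qed
  then show ?thesis by blast
qed

lemma continuous_map_odo_topI:
  assumes q: "dvd_chain q" and into: "\<And>x. x \<in> odo q \<Longrightarrow> f x \<in> odo q"
    and local: "\<And>n. \<exists>N. \<forall>x\<in>odo q. \<forall>y\<in>odo q. x N = y N \<longrightarrow> f x n = f y n"
  shows "continuous_map (odo_top q) (odo_top q) f"
proof -
  have "continuous_map (odo_top q) (discrete_topology {..<q n}) (\<lambda>x. f x n)" for n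
  proof -
    obtain N where N: "\<forall>x\<in>odo q. \<forall>y\<in>odo q. x N = y N \<longrightarrow> f x n = f y n"
      using local by blast
    let ?g = "\<lambda>t. f (odo_const q t) n"
    have "continuous_map (odo_top q) (discrete_topology {..<q N}) (\<lambda>x. x N)"
      unfolding odo_top_def
      by (intro continuous_map_from_subtopology continuous_map_product_projection) simp
    moreover have "continuous_map (discrete_topology {..<q N}) (discrete_topology {..<q n}) ?g"
      using into[OF odo_const_closed[OF q]] odo_less by auto
    ultimately have "continuous_map (odo_top q) (discrete_topology {..<q n}) (?g \<circ> (\<lambda>x. x N))"
      by (rule continuous_map_compose)
    moreover have "(?g \<circ> (\<lambda>x. x N)) x = f x n" if "x \<in> odo q" for x
    proof -
      have "odo_const q (x N) N = x N" using odo_less[OF that] by (simp add: odo_const_def)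
      then have "f (odo_const q (x N)) n = f x n"
        using N that odo_const_closed[OF q] by blast
      then show ?thesis by simp
    qed
    ultimately show ?thesis
      by (rule continuous_map_eq) simp
  qed
  then have "continuous_map (odo_top q) (product_topology (\<lambda>n. discrete_topology {..<q n}) UNIV) f"
    by (simp add: continuous_map_componentwise_UNIV)
  then show ?thesis
    using into unfolding odo_top_def by (auto simp: continuous_map_in_subtopology)
qed

section \<open>Maps commuting with a power of the odometer\<close>

lemma funpow_commute_on:
  assumes "\<And>x. x \<in> X \<Longrightarrow> g x \<in> X" "\<And>x. x \<in> X \<Longrightarrow> f (g x) = g (f x)" "x \<in> X"
  shows "f ((g ^^ t) x) = (g ^^ t) (f x)"
  using assms(3)
proof (induction t arbitrary: x)
  case (Suc t)
  then show ?case by (simp add: assms(1,2) funpow_Suc_right del: funpow.simps)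
qed simp

lemma commute_odo_T_pow_dvd:
  assumes p: "dvd_chain p"
    and comm: "\<And>x. x \<in> odo p \<Longrightarrow> f ((odo_T p ^^ a) x) = (odo_T p ^^ a) (f x)"
    and "a dvd c" and x: "x \<in> odo p"
  shows "f ((odo_T p ^^ c) x) = (odo_T p ^^ c) (f x)"
proof -
  obtain b where "c = a * b" using \<open>a dvd c\<close> by blast
  moreover have "f (((odo_T p ^^ a) ^^ b) x) = ((odo_T p ^^ a) ^^ b) (f x)"
    using funpow_commute_on[of "odo p" "odo_T p ^^ a" f, OF odo_T_pow_closed[OF p] comm x] .
  ultimately show ?thesis by (simp add: funpow_mult)
qed

text \<open>A continuous map commuting with T^M commutes with translation by every element of the
  closure of M\<int>, because such a translation is a pointwise limit of powers of T^M.\<close>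

lemma commute_odo_translation:
  assumes p: "dvd_chain p" and f: "continuous_map (odo_top p) (odo_top p) f"
    and comm: "\<And>x. x \<in> odo p \<Longrightarrow> f ((odo_T p ^^ M) x) = (odo_T p ^^ M) (f x)"
    and e: "e \<in> odo p" and e_closure: "\<And>N. \<exists>t. (M * t) mod p N = e N"
    and x: "x \<in> odo p"
  shows "f (odo_add p x e) = odo_add p (f x) e"
proof
  fix n
  define z where "z = odo_add p x e"
  have z: "z \<in> odo p" unfolding z_def using odo_add_closed[OF p x e] .
  obtain N0 where N0: "\<forall>w\<in>odo p. w N0 = z N0 \<longrightarrow> f w n = f z n"
    using continuous_map_odo_top_local[OF f p z] by blast
  define N where "N = max N0 n"
  obtain t where t: "(M * t) mod p N = e N" using e_closure by blast
  define w where "w = (odo_T p ^^ (M * t)) x"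
  have w: "w \<in> odo p" unfolding w_def using odo_T_pow_closed[OF p x] .
  have "w N = (x N + (M * t) mod p N) mod p N"
    by (simp add: w_def odo_T_pow[OF x] odo_add_def odo_const_def mod_add_right_eq)
  then have "w N = z N" using t by (simp add: z_def odo_add_def)
  then have "w N0 = z N0"
    using odo_mod[OF p w, of N0 N] odo_mod[OF p z, of N0 N] by (simp add: N_def)
  have fw: "f w = (odo_T p ^^ (M * t)) (f x)"
    unfolding w_def by (rule commute_odo_T_pow_dvd[where a = M]) (use p comm x in auto)
  have "f z n = f w n" using N0 w \<open>w N0 = z N0\<close> by simp
  also have "\<dots> = (odo_T p ^^ (M * t)) (f x) n" using fw by simp
  also have "\<dots> = (f x n + (M * t) mod p N mod p n) mod p n"
  proof -
    have "p n dvd p N" using dvd_chain_dvd[OF p] by (simp add: N_def)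
    then show ?thesis
      using continuous_map_odo_top_funspace[OF f x]
      by (simp add: odo_T_pow odo_add_def odo_const_def mod_mod_cancel mod_add_right_eq)
  qed
  also have "\<dots> = odo_add p (f x) e n"
    using t odo_mod[OF p e, of n N] by (simp add: N_def odo_add_def)
  finally show "f (odo_add p x e) n = odo_add p (f x) e n" by (simp add: z_def)
qed

lemma gcd_eventually_const:
  assumes "dvd_chain p" "0 < M"
  obtains K where "\<And>N. K \<le> N \<Longrightarrow> gcd M (p N) = gcd M (p K)"
proof -
  have fin: "finite (range (\<lambda>n. gcd M (p n)))"
    by (rule finite_subset[of _ "{..M}"]) (auto simp: assms(2) dvd_imp_le)
  then obtain K where K: "gcd M (p K) = Max (range (\<lambda>n. gcd M (p n)))"
    using Max_in by fastforce
  have "gcd M (p N) = gcd M (p K)" if "K \<le> N" for N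
  proof (rule antisym)
    have "gcd M (p K) dvd gcd M (p N)"
      using dvd_chain_dvd[OF assms(1) that] by (meson dvd_trans gcd_dvd1 gcd_dvd2 gcd_greatest)
    then show "gcd M (p K) \<le> gcd M (p N)" using assms(2) by (simp add: dvd_imp_le)
    show "gcd M (p N) \<le> gcd M (p K)" using K fin by simp
  qed
  then show ?thesis using that by blast
qed

text \<open>If d = gcd M (p N) for all large N, then by Bezout d lies in the closure of M\<int>; so f
  commutes with T^d and hence with T^(p K), as d divides p K.\<close>

lemma commute_odo_T_pow_scale:
  assumes p: "dvd_chain p" and f: "continuous_map (odo_top p) (odo_top p) f" and "0 < M"
    and comm: "\<And>x. x \<in> odo p \<Longrightarrow> f ((odo_T p ^^ M) x) = (odo_T p ^^ M) (f x)"
  obtains K where "\<And>x. x \<in> odo p \<Longrightarrow> f ((odo_T p ^^ p K) x) = (odo_T p ^^ p K) (f x)"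
proof -
  obtain K where K: "\<And>N. K \<le> N \<Longrightarrow> gcd M (p N) = gcd M (p K)"
    using gcd_eventually_const[OF p \<open>0 < M\<close>] by blast
  define d where "d = gcd M (p K)"
  have d_closure: "\<exists>t. (M * t) mod p N = odo_const p d N" for N
  proof -
    define N' where "N' = max N K"
    obtain t y where "M * t = p N' * y + d"
      using bezout_nat[of M "p N'"] \<open>0 < M\<close> K[of N'] by (auto simp: N'_def d_def)
    then have "(M * t) mod p N' = d mod p N'" by simp
    moreover have "p N dvd p N'" using dvd_chain_dvd[OF p] by (simp add: N'_def)
    ultimately have "(M * t) mod p N = d mod p N" by (metis mod_mod_cancel)
    then show ?thesis by (auto simp: odo_const_def)
  qed
  have d_comm: "f ((odo_T p ^^ d) x) = (odo_T p ^^ d) (f x)" if x: "x \<in> odo p" for x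
    using commute_odo_translation[OF p f comm odo_const_closed[OF p] d_closure x]
    by (simp add: odo_T_pow x continuous_map_odo_top_funspace[OF f x])
  show ?thesis
  proof (rule that)
    show "f ((odo_T p ^^ p K) x) = (odo_T p ^^ p K) (f x)" if "x \<in> odo p" for x
      using commute_odo_T_pow_dvd[where f = f and a = d, OF p d_comm _ that] by (simp add: d_def)
  qed
qed

definition aut_T_pow :: "(nat \<Rightarrow> nat) \<Rightarrow> nat \<Rightarrow> ((nat \<Rightarrow> nat) \<Rightarrow> (nat \<Rightarrow> nat)) set" where
  "aut_T_pow p m =
     {f \<in> carrier (aut_inf p). \<forall>x\<in>odo p. f ((odo_T p ^^ m) x) = (odo_T p ^^ m) (f x)}"

lemma aut_inf_carrierD:
  assumes "f \<in> carrier (aut_inf p)"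
  shows "f \<in> extensional (odo p)" "continuous_map (odo_top p) (odo_top p) f"
    "inj_on f (odo p)" "x \<in> odo p \<Longrightarrow> f x \<in> odo p"
  using assms homeomorphic_imp_continuous_map homeomorphic_imp_injective_map
    continuous_map_odo_top_funspace
  by (fastforce simp: aut_inf_def)+

lemma aut_T_pow_mono:
  assumes "dvd_chain p" "a dvd b"
  shows "aut_T_pow p a \<subseteq> aut_T_pow p b"
  using commute_odo_T_pow_dvd[OF assms(1) _ assms(2)] by (auto simp: aut_T_pow_def)

lemma carrier_aut_inf_eq:
  assumes p: "dvd_chain p"
  shows "carrier (aut_inf p) = (\<Union>K. aut_T_pow p (p K))"
proof
  show "carrier (aut_inf p) \<subseteq> (\<Union>K. aut_T_pow p (p K))"
  proof
    fix f assume f: "f \<in> carrier (aut_inf p)"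
    then obtain M where "1 \<le> M" "\<forall>x\<in>odo p. f ((odo_T p ^^ M) x) = (odo_T p ^^ M) (f x)"
      by (auto simp: aut_inf_def)
    then obtain K where "\<forall>x\<in>odo p. f ((odo_T p ^^ p K) x) = (odo_T p ^^ p K) (f x)"
      using commute_odo_T_pow_scale[OF p aut_inf_carrierD(2)[OF f]]
      by (metis less_le_trans zero_less_one)
    then show "f \<in> (\<Union>K. aut_T_pow p (p K))" using f by (auto simp: aut_T_pow_def)
  qed
qed (auto simp: aut_T_pow_def)

section \<open>Splitting off the lowest digit\<close>

lemma mod_add_mult_cong:
  fixes a m y y' P Q :: nat
  assumes "P dvd m * Q" "y' mod Q = y"
  shows "(a + m * y') mod P = (a + m * y) mod P"
proof -
  obtain e where e: "m * Q = P * e" using assms(1) by blast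
  have "m * y' = m * (y' div Q * Q + y' mod Q)" by simp
  also have "\<dots> = m * y + P * (e * (y' div Q))"
    using assms(2) e by (simp add: algebra_simps)
  finally have "a + m * y' = (a + m * y) + P * (e * (y' div Q))" by simp
  then show ?thesis by (simp only: mod_mult_self2)
qed

lemma add_mult_mod_mult:
  fixes a m y Q :: nat
  assumes "a < m"
  shows "(a + m * y) mod (m * Q) = a + m * (y mod Q)"
  using assms by (simp add: mod_mult2_eq)

text \<open>Writing x = a + m y with a < m identifies odo p with {..<m} \<times> odo q, where
  q i = p (i + s) / m; the k-th group of the direct system uses m = p (k - 1) and s = k.\<close>

locale odometer_factor =
  fixes p :: "nat \<Rightarrow> nat" and m s :: nat and q :: "nat \<Rightarrow> nat"
  assumes p: "dvd_chain p" and factor: "\<And>i. m * q i = p (i + s)"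
begin

lemma m_pos: "0 < m"
  using factor[of 0] dvd_chain_pos[OF p, of s] by (auto intro: gr0I)

lemma q: "dvd_chain q"
  unfolding dvd_chain_def
proof (intro conjI allI)
  fix i
  show "0 < q i" using factor[of i] dvd_chain_pos[OF p, of "i + s"] by (auto intro: gr0I)
  have "m * q i dvd m * q (Suc i)" using p factor by (simp add: dvd_chain_def)
  then show "q i dvd q (Suc i)" using m_pos by simp
qed

lemma p_dvd_factor: "p n dvd m * q n"
  using dvd_chain_dvd[OF p, of n "n + s"] factor by simp

lemma m_dvd:
  assumes "s \<le> N"
  shows "m dvd p N"
proof -
  have "p s = m * q 0" using factor[of 0] by simp
  then show ?thesis using dvd_chain_dvd[OF p assms] dvd_trans by force
qed

definition combine :: "nat \<Rightarrow> (nat \<Rightarrow> nat) \<Rightarrow> (nat \<Rightarrow> nat)" where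
  "combine a y = (\<lambda>n. (a + m * y n) mod p n)"

definition low :: "(nat \<Rightarrow> nat) \<Rightarrow> nat" where
  "low x = x s mod m"

definition high :: "(nat \<Rightarrow> nat) \<Rightarrow> (nat \<Rightarrow> nat)" where
  "high x = (\<lambda>i. x (i + s) div m)"

lemma combine_closed:
  assumes "y \<in> odo q"
  shows "combine a y \<in> odo p"
proof (rule odoI)
  fix n
  show "combine a y n < p n" using dvd_chain_pos[OF p] by (simp add: combine_def)
  have "p n dvd p (Suc n)" using p by (simp add: dvd_chain_def)
  then have "combine a y (Suc n) mod p n = (a + m * y (Suc n)) mod p n"
    by (simp add: combine_def mod_mod_cancel)
  also have "\<dots> = (a + m * y n) mod p n"
    using assms by (intro mod_add_mult_cong[OF p_dvd_factor]) (simp add: odo_def)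
  finally show "combine a y (Suc n) mod p n = combine a y n" by (simp add: combine_def)
qed

lemma low_less: "low x < m"
  using m_pos by (simp add: low_def)

lemma low_eq:
  assumes "x \<in> odo p" "s \<le> N"
  shows "low x = x N mod m"
proof -
  have "x N mod p s mod m = x N mod m" using m_dvd[OF order_refl] by (rule mod_mod_cancel)
  then show ?thesis using odo_mod[OF p assms] by (simp add: low_def)
qed

lemma high_closed:
  assumes x: "x \<in> odo p"
  shows "high x \<in> odo q"
proof (rule odoI)
  fix i
  have "x (i + s) < m * q i" using odo_less[OF x] factor[of i] by simp
  then show "high x i < q i" by (simp add: high_def less_mult_imp_div_less mult.commute)
  define X where "X = x (Suc i + s)"
  have "x (i + s) = X mod (m * q i)"
    using odo_mod[OF p x, of "i + s" "Suc i + s"] factor[of i] by (simp add: X_def)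
  also have "\<dots> = m * (X div m mod q i) + X mod m" by (rule mod_mult2_eq)
  finally have "x (i + s) div m = X div m mod q i" using m_pos by simp
  then show "high x (Suc i) mod q i = high x i" by (simp add: high_def X_def)
qed

lemma low_combine: "a < m \<Longrightarrow> low (combine a y) = a"
  using m_dvd[OF order_refl] by (simp add: low_def combine_def mod_mod_cancel)

lemma high_combine:
  assumes "a < m" "y \<in> odo q"
  shows "high (combine a y) = y"
proof
  fix i
  have "combine a y (i + s) = (a + m * y (i + s)) mod (m * q i)"
    by (simp add: combine_def factor)
  also have "\<dots> = a + m * (y (i + s) mod q i)" by (rule add_mult_mod_mult[OF assms(1)])
  also have "\<dots> = a + m * y i" using odo_mod[OF q assms(2), of i "i + s"] by simp
  finally show "high (combine a y) i = y i" using assms(1) by (simp add: high_def)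
qed

lemma combine_low_high:
  assumes x: "x \<in> odo p"
  shows "combine (low x) (high x) = x"
proof
  fix n
  have "low x + m * high x n = x (n + s)"
    using low_eq[OF x, of "n + s"] by (simp add: high_def)
  then show "combine (low x) (high x) n = x n"
    using odo_mod[OF p x, of n "n + s"] by (simp add: combine_def)
qed

lemma odo_split:
  assumes "x \<in> odo p"
  obtains a y where "a < m" "y \<in> odo q" "x = combine a y"
  by (rule that[OF low_less high_closed[OF assms] combine_low_high[OF assms, symmetric]])

lemma combine_inject:
  assumes "a < m" "b < m" "y \<in> odo q" "z \<in> odo q"
  shows "combine a y = combine b z \<longleftrightarrow> a = b \<and> y = z"
proof
  assume "combine a y = combine b z"
  then have "low (combine a y) = low (combine b z)" "high (combine a y) = high (combine b z)"
    by simp_all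
  then show "a = b \<and> y = z" using low_combine high_combine assms by simp
qed simp

lemma combine_add:
  "odo_add p (combine a y) (combine 0 z) = combine a (odo_add q y z)"
proof
  fix n
  have "odo_add p (combine a y) (combine 0 z) n = (a + m * (y n + z n)) mod p n"
    by (simp add: odo_add_def combine_def mod_add_eq add_mult_distrib2 add.assoc)
  also have "\<dots> = (a + m * ((y n + z n) mod q n)) mod p n"
    by (rule mod_add_mult_cong[OF p_dvd_factor]) simp
  finally show "odo_add p (combine a y) (combine 0 z) n = combine a (odo_add q y z) n"
    by (simp add: combine_def odo_add_def)
qed

lemma combine_const: "combine 0 (odo_const q k) = odo_const p (m * k)"
proof
  fix n
  have "(0 + m * k) mod p n = (0 + m * (k mod q n)) mod p n"
    by (rule mod_add_mult_cong[OF p_dvd_factor]) simp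
  then show "combine 0 (odo_const q k) n = odo_const p (m * k) n"
    by (simp add: combine_def odo_const_def)
qed

end

section \<open>The wreath product acting on the odometer\<close>

lemma inj_on_imp_permutes_extension:
  assumes "finite A" "inj_on f A" "f ` A \<subseteq> A"
  shows "(\<lambda>a. if a \<in> A then f a else a) permutes A"
proof (rule bij_imp_permutes)
  have "f ` A = A" using assms by (simp add: endo_inj_surj)
  then show "bij_betw (\<lambda>a. if a \<in> A then f a else a) A A"
    using assms(2) by (auto simp: bij_betw_def inj_on_def)
qed simp

lemma wr_grp_carrier_iff:
  "(v, \<sigma>) \<in> carrier (wr_grp q m) \<longleftrightarrow> v \<in> {..<m} \<rightarrow>\<^sub>E odo q \<and> \<sigma> permutes {..<m}"
  by (simp add: wr_grp_def)

lemma wr_grp_carrierD: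
  assumes "(v, \<sigma>) \<in> carrier (wr_grp q m)" "a < m"
  shows "\<sigma> a < m" "inv_into UNIV \<sigma> a < m" "v a \<in> odo q"
  using assms permutes_in_image[of \<sigma> "{..<m}"] permutes_in_image[OF permutes_inv, of \<sigma> "{..<m}"]
  by (auto simp: wr_grp_carrier_iff)

lemma wr_grp_mult:
  "(v, \<sigma>) \<otimes>\<^bsub>wr_grp q m\<^esub> (w, \<tau>) = ((\<lambda>i\<in>{..<m}. odo_add q (v i) (w (inv_into UNIV \<sigma> i))), \<sigma> \<circ> \<tau>)"
  by (simp add: wr_grp_def)

lemma wr_grp_one: "\<one>\<^bsub>wr_grp q m\<^esub> = ((\<lambda>i\<in>{..<m}. \<lambda>n. 0), id)"
  by (simp add: wr_grp_def)

lemma wr_grp_mult_closed: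
  assumes q: "dvd_chain q" and "a \<in> carrier (wr_grp q m)" "b \<in> carrier (wr_grp q m)"
  shows "a \<otimes>\<^bsub>wr_grp q m\<^esub> b \<in> carrier (wr_grp q m)"
proof -
  obtain v \<sigma> w \<tau> where ab: "a = (v, \<sigma>)" "b = (w, \<tau>)" by fastforce
  then have "(\<lambda>i\<in>{..<m}. odo_add q (v i) (w (inv_into UNIV \<sigma> i))) \<in> {..<m} \<rightarrow>\<^sub>E odo q"
    using assms wr_grp_carrierD by (auto intro: odo_add_closed[OF q])
  moreover have "\<sigma> \<circ> \<tau> permutes {..<m}"
    using assms ab by (simp add: wr_grp_carrier_iff permutes_compose)
  ultimately show ?thesis using ab by (simp add: wr_grp_mult wr_grp_carrier_iff)
qed

definition wr_inv :: "(nat \<Rightarrow> nat) \<Rightarrow> nat \<Rightarrow>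
    (nat \<Rightarrow> nat \<Rightarrow> nat) \<times> (nat \<Rightarrow> nat) \<Rightarrow> (nat \<Rightarrow> nat \<Rightarrow> nat) \<times> (nat \<Rightarrow> nat)" where
  "wr_inv q m = (\<lambda>(v, \<sigma>). ((\<lambda>i\<in>{..<m}. odo_neg q (v (\<sigma> i))), inv_into UNIV \<sigma>))"

lemma wr_inv_closed:
  assumes q: "dvd_chain q" and a: "a \<in> carrier (wr_grp q m)"
  shows "wr_inv q m a \<in> carrier (wr_grp q m)"
proof -
  obtain v \<sigma> where a_eq: "a = (v, \<sigma>)" by fastforce
  then have "\<sigma> permutes {..<m}" using a by (simp add: wr_grp_carrier_iff)
  then show ?thesis
    using a a_eq wr_grp_carrierD
    by (auto simp: wr_inv_def wr_grp_carrier_iff permutes_inv intro: odo_neg_closed[OF q])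
qed

lemma wr_inv_mult:
  assumes a: "a \<in> carrier (wr_grp q m)"
  shows "wr_inv q m a \<otimes>\<^bsub>wr_grp q m\<^esub> a = \<one>\<^bsub>wr_grp q m\<^esub>"
    and "a \<otimes>\<^bsub>wr_grp q m\<^esub> wr_inv q m a = \<one>\<^bsub>wr_grp q m\<^esub>"
proof -
  obtain v \<sigma> where a_eq: "a = (v, \<sigma>)" by fastforce
  with a have a': "(v, \<sigma>) \<in> carrier (wr_grp q m)" by simp
  then have \<sigma>: "\<sigma> permutes {..<m}" by (simp add: wr_grp_carrier_iff)
  have v: "v (\<sigma> i) \<in> odo q" "v i \<in> odo q" if "i < m" for i
    using wr_grp_carrierD[OF a' that] wr_grp_carrierD(3)[OF a' wr_grp_carrierD(1)[OF a' that]]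
    by simp_all
  have \<sigma>_inv: "inv_into UNIV \<sigma> i < m" if "i < m" for i
    using wr_grp_carrierD(2)[OF a' that] .
  show "wr_inv q m a \<otimes>\<^bsub>wr_grp q m\<^esub> a = \<one>\<^bsub>wr_grp q m\<^esub>"
    using a_eq \<sigma> v odo_add_neg_left
    by (simp add: wr_inv_def wr_grp_mult wr_grp_one permutes_inv_o inv_inv_eq permutes_bij
        restrict_def fun_eq_iff)
  show "a \<otimes>\<^bsub>wr_grp q m\<^esub> wr_inv q m a = \<one>\<^bsub>wr_grp q m\<^esub>"
    using a_eq \<sigma> \<sigma>_inv v odo_add_neg_right
    by (simp add: wr_inv_def wr_grp_mult wr_grp_one permutes_inv_o permutes_inverses
        restrict_def fun_eq_iff)
qed

context odometer_factor
begin

text \<open>(v, \<sigma>) acts by a + m y \<mapsto> \<sigma> a + m (v (\<sigma> a) + y); the twist w (inv \<sigma> i) in the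
  product (v, \<sigma>) (w, \<tau>) of wr_grp is exactly what makes this action a homomorphism.\<close>

definition wreath_map :: "(nat \<Rightarrow> nat \<Rightarrow> nat) \<times> (nat \<Rightarrow> nat) \<Rightarrow> (nat \<Rightarrow> nat) \<Rightarrow> (nat \<Rightarrow> nat)" where
  "wreath_map = (\<lambda>(v, \<sigma>). \<lambda>x\<in>odo p. combine (\<sigma> (low x)) (odo_add q (v (\<sigma> (low x))) (high x)))"

lemma wreath_map_combine:
  assumes "(v, \<sigma>) \<in> carrier (wr_grp q m)" "a < m" "y \<in> odo q"
  shows "wreath_map (v, \<sigma>) (combine a y) = combine (\<sigma> a) (odo_add q (v (\<sigma> a)) y)"
  using assms combine_closed low_combine high_combine by (simp add: wreath_map_def)

lemma wreath_map_closed: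
  assumes "g \<in> carrier (wr_grp q m)" "x \<in> odo p"
  shows "wreath_map g x \<in> odo p"
proof -
  obtain v \<sigma> where g: "g = (v, \<sigma>)" by fastforce
  have "v (\<sigma> (low x)) \<in> odo q"
    using assms g wr_grp_carrierD(1,3) low_less by blast
  then show ?thesis
    using assms g by (simp add: wreath_map_def combine_closed odo_add_closed[OF q] high_closed)
qed

lemma wreath_map_mult:
  assumes g: "g \<in> carrier (wr_grp q m)" and h: "h \<in> carrier (wr_grp q m)"
  shows "wreath_map (g \<otimes>\<^bsub>wr_grp q m\<^esub> h) = compose (odo p) (wreath_map g) (wreath_map h)"
proof
  fix x
  obtain v \<sigma> w \<tau> where gh: "g = (v, \<sigma>)" "h = (w, \<tau>)" by fastforce
  have gh_mem: "(v, \<sigma>) \<in> carrier (wr_grp q m)" "(w, \<tau>) \<in> carrier (wr_grp q m)"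
    using g h gh by simp_all
  have \<sigma>: "\<sigma> permutes {..<m}" using gh_mem by (simp add: wr_grp_carrier_iff)
  show "wreath_map (g \<otimes>\<^bsub>wr_grp q m\<^esub> h) x = compose (odo p) (wreath_map g) (wreath_map h) x"
  proof (cases "x \<in> odo p")
    case True
    then obtain a y where a: "a < m" and y: "y \<in> odo q" and x: "x = combine a y"
      by (rule odo_split)
    have \<tau>a: "\<tau> a < m" using wr_grp_carrierD(1)[OF gh_mem(2) a] .
    then have w\<tau>a: "w (\<tau> a) \<in> odo q" using wr_grp_carrierD(3)[OF gh_mem(2)] by blast
    have \<sigma>\<tau>a: "\<sigma> (\<tau> a) < m" using wr_grp_carrierD(1)[OF gh_mem(1) \<tau>a] .
    have "compose (odo p) (wreath_map g) (wreath_map h) x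
        = combine (\<sigma> (\<tau> a)) (odo_add q (v (\<sigma> (\<tau> a))) (odo_add q (w (\<tau> a)) y))"
      using True a y x gh wreath_map_combine[OF gh_mem(2) a y]
        wreath_map_combine[OF gh_mem(1) \<tau>a odo_add_closed[OF q w\<tau>a y]]
      by (simp add: compose_def)
    also have "\<dots> = wreath_map (g \<otimes>\<^bsub>wr_grp q m\<^esub> h) x"
      using wr_grp_mult_closed[OF q gh_mem] \<sigma>\<tau>a
      by (simp add: gh x wr_grp_mult wreath_map_combine[OF _ a y] odo_add_assoc
          permutes_inverses(2)[OF \<sigma>])
    finally show ?thesis ..
  qed (simp add: wreath_map_def compose_def case_prod_beta)
qed

lemma wreath_map_one: "wreath_map \<one>\<^bsub>wr_grp q m\<^esub> = restrict id (odo p)"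
proof
  fix x
  show "wreath_map \<one>\<^bsub>wr_grp q m\<^esub> x = restrict id (odo p) x"
  proof (cases "x \<in> odo p")
    case True
    then show ?thesis
      using odo_add_zero_left[OF high_closed[OF True]] combine_low_high[OF True] low_less
      by (simp add: wreath_map_def wr_grp_one)
  qed (simp add: wreath_map_def wr_grp_one)
qed

lemma wreath_map_continuous:
  assumes g: "g \<in> carrier (wr_grp q m)"
  shows "continuous_map (odo_top p) (odo_top p) (wreath_map g)"
proof (rule continuous_map_odo_topI[OF p wreath_map_closed[OF g]])
  fix n
  have "wreath_map g x n = wreath_map g y n"
    if "x \<in> odo p" "y \<in> odo p" "x (n + s) = y (n + s)" for x y
  proof -
    have "low x = low y"
      using low_eq[OF that(1), of "n + s"] low_eq[OF that(2), of "n + s"] that(3) by simp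
    moreover have "high x n = high y n" using that(3) by (simp add: high_def)
    ultimately show ?thesis
      using that by (simp add: wreath_map_def combine_def odo_add_def case_prod_beta)
  qed
  then show "\<exists>N. \<forall>x\<in>odo p. \<forall>y\<in>odo p. x N = y N \<longrightarrow> wreath_map g x n = wreath_map g y n"
    by blast
qed

lemma wreath_map_homeomorphic:
  assumes g: "g \<in> carrier (wr_grp q m)"
  shows "homeomorphic_map (odo_top p) (odo_top p) (wreath_map g)"
proof -
  let ?g' = "wr_inv q m g"
  have g': "?g' \<in> carrier (wr_grp q m)" using wr_inv_closed[OF q g] .
  have "compose (odo p) (wreath_map ?g') (wreath_map g) = restrict id (odo p)"
    "compose (odo p) (wreath_map g) (wreath_map ?g') = restrict id (odo p)"
    using wreath_map_mult[OF g' g] wreath_map_mult[OF g g'] wr_inv_mult[OF g] wreath_map_one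
    by simp_all
  then have "compose (odo p) (wreath_map ?g') (wreath_map g) x = x"
    "compose (odo p) (wreath_map g) (wreath_map ?g') x = x" if "x \<in> odo p" for x
    using that by simp_all
  then have "wreath_map ?g' (wreath_map g x) = x" "wreath_map g (wreath_map ?g' x) = x"
    if "x \<in> odo p" for x
    using that by (simp_all add: compose_def)
  then have "homeomorphic_maps (odo_top p) (odo_top p) (wreath_map g) (wreath_map ?g')"
    using wreath_map_continuous[OF g] wreath_map_continuous[OF g']
    by (simp add: homeomorphic_maps_def)
  then show ?thesis using homeomorphic_map_maps by blast
qed

lemma wreath_map_commute_T:
  assumes g: "g \<in> carrier (wr_grp q m)" and x: "x \<in> odo p"
  shows "wreath_map g ((odo_T p ^^ m) x) = (odo_T p ^^ m) (wreath_map g x)"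
proof -
  obtain v \<sigma> where g_eq: "g = (v, \<sigma>)" by fastforce
  with g have g': "(v, \<sigma>) \<in> carrier (wr_grp q m)" by simp
  obtain a y where a: "a < m" and y: "y \<in> odo q" and x_eq: "x = combine a y"
    using odo_split[OF x] .
  have one: "odo_const p m = combine 0 (odo_const q 1)" using combine_const[of 1] by simp
  note c1 = odo_const_closed[OF q, of 1]
  have "(odo_T p ^^ m) x = combine a (odo_add q y (odo_const q 1))"
    using odo_T_pow[OF x] combine_add x_eq one by simp
  then have "wreath_map g ((odo_T p ^^ m) x)
      = combine (\<sigma> a) (odo_add q (odo_add q (v (\<sigma> a)) y) (odo_const q 1))"
    using wreath_map_combine[OF g' a odo_add_closed[OF q y c1]] g_eq by (simp add: odo_add_assoc)
  also have "\<dots> = (odo_T p ^^ m) (wreath_map g x)"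
    using odo_T_pow[OF wreath_map_closed[OF g x]] wreath_map_combine[OF g' a y] g_eq x_eq one
      combine_add by simp
  finally show ?thesis .
qed

lemma wreath_map_in_aut_T_pow:
  assumes g: "g \<in> carrier (wr_grp q m)"
  shows "wreath_map g \<in> aut_T_pow p m"
proof -
  have "wreath_map g \<in> extensional (odo p)" by (simp add: wreath_map_def case_prod_beta)
  then show ?thesis
    using wreath_map_homeomorphic[OF g] wreath_map_commute_T[OF g] m_pos
    by (auto simp: aut_T_pow_def aut_inf_def intro!: exI[of _ m])
qed

lemma inj_on_wreath_map: "inj_on wreath_map (carrier (wr_grp q m))"
proof (rule inj_onI)
  fix g h assume g: "g \<in> carrier (wr_grp q m)" and h: "h \<in> carrier (wr_grp q m)"
    and eq: "wreath_map g = wreath_map h"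
  obtain v \<sigma> w \<tau> where gh: "g = (v, \<sigma>)" "h = (w, \<tau>)" by fastforce
  have gh_mem: "(v, \<sigma>) \<in> carrier (wr_grp q m)" "(w, \<tau>) \<in> carrier (wr_grp q m)"
    using g h gh by simp_all
  have at_a: "\<sigma> a = \<tau> a \<and> v (\<sigma> a) = w (\<tau> a)" if a: "a < m" for a
  proof -
    note \<sigma>a = wr_grp_carrierD(1,3)[OF gh_mem(1) wr_grp_carrierD(1)[OF gh_mem(1) a]]
    note \<tau>a = wr_grp_carrierD(1,3)[OF gh_mem(2) wr_grp_carrierD(1)[OF gh_mem(2) a]]
    have "combine (\<sigma> a) (v (\<sigma> a)) = combine (\<tau> a) (w (\<tau> a))"
      using wreath_map_combine[OF gh_mem(1) a odo_zero[OF q]]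
        wreath_map_combine[OF gh_mem(2) a odo_zero[OF q]] eq gh odo_add_zero_right \<sigma>a(2) \<tau>a(2)
      by simp
    then show ?thesis using combine_inject \<sigma>a \<tau>a wr_grp_carrierD(1) gh_mem a by blast
  qed
  have \<sigma>\<tau>: "\<sigma> permutes {..<m}" "\<tau> permutes {..<m}"
    using gh_mem by (simp_all add: wr_grp_carrier_iff)
  have "\<sigma> = \<tau>"
  proof
    fix a show "\<sigma> a = \<tau> a"
      using at_a permutes_not_in[OF \<sigma>\<tau>(1)] permutes_not_in[OF \<sigma>\<tau>(2)] by (cases "a < m") auto
  qed
  moreover have "v = w"
  proof
    fix b
    show "v b = w b"
    proof (cases "b < m")
      case True
      then show ?thesis
        using at_a[OF wr_grp_carrierD(2)[OF gh_mem(1) True]] permutes_inverses(1)[OF \<sigma>\<tau>(1)]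
        by simp
    next
      case False
      then show ?thesis using gh_mem by (auto simp: wr_grp_carrier_iff PiE_iff extensional_def)
    qed
  qed
  ultimately show "g = h" using gh by simp
qed

definition aut_perm :: "((nat \<Rightarrow> nat) \<Rightarrow> (nat \<Rightarrow> nat)) \<Rightarrow> nat \<Rightarrow> nat" where
  "aut_perm f a = low (f (combine a (\<lambda>n. 0)))"

definition aut_shift :: "((nat \<Rightarrow> nat) \<Rightarrow> (nat \<Rightarrow> nat)) \<Rightarrow> nat \<Rightarrow> (nat \<Rightarrow> nat)" where
  "aut_shift f a = high (f (combine a (\<lambda>n. 0)))"

lemma aut_shift_closed: "f \<in> carrier (aut_inf p) \<Longrightarrow> aut_shift f a \<in> odo q"
  using high_closed aut_inf_carrierD(4) combine_closed[OF odo_zero[OF q]]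
  by (simp add: aut_shift_def)

lemma aut_T_pow_combine:
  assumes f: "f \<in> aut_T_pow p m" and a: "a < m" and y: "y \<in> odo q"
  shows "f (combine a y) = combine (aut_perm f a) (odo_add q (aut_shift f a) y)"
proof -
  let ?x = "combine a (\<lambda>n. 0)"
  have f_aut: "f \<in> carrier (aut_inf p)"
    and comm: "\<And>x. x \<in> odo p \<Longrightarrow> f ((odo_T p ^^ m) x) = (odo_T p ^^ m) (f x)"
    using f by (auto simp: aut_T_pow_def)
  have x: "?x \<in> odo p" using combine_closed[OF odo_zero[OF q]] .
  have "\<exists>t. (m * t) mod p N = combine 0 y N" for N
    by (auto simp: combine_def)
  then have "f (odo_add p ?x (combine 0 y)) = odo_add p (f ?x) (combine 0 y)"
    using commute_odo_translation[OF p aut_inf_carrierD(2)[OF f_aut] comm combine_closed[OF y] _ x]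
    by blast
  moreover have "odo_add p ?x (combine 0 y) = combine a y"
    using combine_add odo_add_zero_left[OF y] by simp
  moreover have "f ?x = combine (aut_perm f a) (aut_shift f a)"
    using combine_low_high[OF aut_inf_carrierD(4)[OF f_aut x]] by (simp add: aut_perm_def aut_shift_def)
  ultimately show ?thesis using combine_add by metis
qed

lemma inj_on_aut_perm:
  assumes f: "f \<in> aut_T_pow p m"
  shows "inj_on (aut_perm f) {..<m}"
proof (rule inj_onI)
  fix a b assume a: "a \<in> {..<m}" and b: "b \<in> {..<m}" and eq: "aut_perm f a = aut_perm f b"
  have f_aut: "f \<in> carrier (aut_inf p)" using f by (simp add: aut_T_pow_def)
  note c = aut_shift_closed[OF f_aut]
  define y where "y = odo_add q (odo_neg q (aut_shift f a)) (aut_shift f b)"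
  have y: "y \<in> odo q" unfolding y_def using odo_add_closed[OF q odo_neg_closed[OF q c] c] .
  have "odo_add q (aut_shift f a) y = odo_add q (aut_shift f b) (\<lambda>n. 0)"
    using odo_add_neg_right[OF c] odo_add_zero_left[OF c] odo_add_zero_right[OF c]
    by (simp add: y_def flip: odo_add_assoc)
  then have "f (combine a y) = f (combine b (\<lambda>n. 0))"
    using aut_T_pow_combine[OF f] a b y odo_zero[OF q] eq by simp
  then have "combine a y = combine b (\<lambda>n. 0)"
    using aut_inf_carrierD(3)[OF f_aut] combine_closed y odo_zero[OF q] by (meson inj_onD)
  then show "a = b" using combine_inject a b y odo_zero[OF q] by simp
qed

lemma aut_T_pow_subset_image: "aut_T_pow p m \<subseteq> wreath_map ` carrier (wr_grp q m)"
proof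
  fix f assume f: "f \<in> aut_T_pow p m"
  then have f_aut: "f \<in> carrier (aut_inf p)" by (simp add: aut_T_pow_def)
  define \<sigma> where "\<sigma> a = (if a \<in> {..<m} then aut_perm f a else a)" for a
  have \<sigma>: "\<sigma> permutes {..<m}"
    unfolding \<sigma>_def
  proof (rule inj_on_imp_permutes_extension)
    show "aut_perm f ` {..<m} \<subseteq> {..<m}" using low_less by (auto simp: aut_perm_def)
  qed (simp_all add: inj_on_aut_perm[OF f])
  define v where "v = (\<lambda>b\<in>{..<m}. aut_shift f (inv_into UNIV \<sigma> b))"
  have g: "(v, \<sigma>) \<in> carrier (wr_grp q m)"
    using \<sigma> aut_shift_closed[OF f_aut] by (simp add: wr_grp_carrier_iff v_def)
  have "f = wreath_map (v, \<sigma>)"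
  proof
    fix x
    show "f x = wreath_map (v, \<sigma>) x"
    proof (cases "x \<in> odo p")
      case True
      then obtain a y where a: "a < m" and y: "y \<in> odo q" and x: "x = combine a y"
        by (rule odo_split)
      have "v (\<sigma> a) = aut_shift f a"
        using permutes_inverses(2)[OF \<sigma>] wr_grp_carrierD(1)[OF g a] by (simp add: v_def)
      then show ?thesis
        using aut_T_pow_combine[OF f a y] wreath_map_combine[OF g a y] a x by (simp add: \<sigma>_def)
    next
      case False
      then show ?thesis
        using aut_inf_carrierD(1)[OF f_aut] by (simp add: wreath_map_def extensional_def)
    qed
  qed
  then show "f \<in> wreath_map ` carrier (wr_grp q m)" using g by blast
qed

lemma wreath_map_iso: "wreath_map \<in> iso (wr_grp q m) (aut_inf p\<lparr>carrier := aut_T_pow p m\<rparr>)"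
proof (rule isoI)
  show "wreath_map \<in> hom (wr_grp q m) (aut_inf p\<lparr>carrier := aut_T_pow p m\<rparr>)"
    using wreath_map_in_aut_T_pow wreath_map_mult by (auto intro!: homI simp: aut_inf_def)
  have "wreath_map ` carrier (wr_grp q m) = aut_T_pow p m"
    using wreath_map_in_aut_T_pow aut_T_pow_subset_image by blast
  then show "bij_betw wreath_map (carrier (wr_grp q m))
      (carrier (aut_inf p\<lparr>carrier := aut_T_pow p m\<rparr>))"
    using inj_on_wreath_map by (simp add: bij_betw_def)
qed

end

section \<open>The direct system\<close>

lemma projl_iso_inl_grp: "projl \<in> iso (inl_grp G) G"
  by (rule isoI) (auto simp: inl_grp_def hom_def bij_betw_def inj_on_def image_iff)

lemma projr_iso_inr_grp: "projr \<in> iso (inr_grp G) G"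
  by (rule isoI) (auto simp: inr_grp_def hom_def bij_betw_def inj_on_def image_iff)

lemma odo_grp_iso_wr_grp_1:
  "(\<lambda>y. ((\<lambda>i\<in>{..<1}. y), id)) \<in> iso (odo_grp q) (wr_grp q 1)"
proof (rule isoI)
  show "(\<lambda>y. ((\<lambda>i\<in>{..<1}. y), id)) \<in> hom (odo_grp q) (wr_grp q 1)"
    by (rule homI) (auto simp: odo_grp_def wr_grp_def permutes_id)
  have "carrier (wr_grp q 1) = (\<lambda>y. ((\<lambda>i\<in>{..<1}. y), id)) ` odo q"
  proof (intro equalityI subsetI)
    fix g assume g: "g \<in> carrier (wr_grp q 1)"
    obtain v \<sigma> where g_eq: "g = (v, \<sigma>)" by fastforce
    with g have v: "v \<in> {..<1} \<rightarrow>\<^sub>E odo q" and "\<sigma> permutes {0}"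
      by (simp_all add: wr_grp_carrier_iff lessThan_Suc)
    then have "\<sigma> = id" by (simp add: permutes_sing)
    moreover have "v = (\<lambda>i\<in>{..<1}. v 0)"
      using v by (auto simp: PiE_iff extensional_def)
    ultimately have "g = ((\<lambda>i\<in>{..<1}. v 0), id)" using g_eq by simp
    moreover have "v 0 \<in> odo q" using v by auto
    ultimately show "g \<in> (\<lambda>y. ((\<lambda>i\<in>{..<1}. y), id)) ` odo q" by (rule image_eqI)
  qed (auto simp: wr_grp_def permutes_id)
  then show "bij_betw (\<lambda>y. ((\<lambda>i\<in>{..<1}. y), id)) (carrier (odo_grp q)) (carrier (wr_grp q 1))"
    by (auto simp: bij_betw_def inj_on_def odo_grp_def fun_eq_iff)
qed

lemma odometer_factor_shift_scale:
  assumes p: "dvd_chain p" and "0 < k"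
  shows "odometer_factor p (p (k - 1)) k (shift_scale p k)"
proof
  fix i
  have "p (k - 1) dvd p (i + k)" using dvd_chain_dvd[OF p] by simp
  then show "p (k - 1) * shift_scale p k i = p (i + k)" by (simp add: shift_scale_def)
qed (rule p)

lemma seq_grp_iso_aut_T_pow:
  assumes p: "dvd_chain p"
  shows "seq_grp p k \<cong> aut_inf p\<lparr>carrier := aut_T_pow p (if k = 0 then 1 else p (k - 1))\<rparr>"
proof (cases "k = 0")
  case True
  interpret odometer_factor p 1 0 p by unfold_locales (simp_all add: p)
  have "seq_grp p k \<cong> odo_grp p"
    using projl_iso_inl_grp True by (auto simp: seq_grp_def intro: is_isoI)
  also have "\<dots> \<cong> wr_grp p 1" using odo_grp_iso_wr_grp_1 by (rule is_isoI)
  also have "\<dots> \<cong> aut_inf p\<lparr>carrier := aut_T_pow p 1\<rparr>" using wreath_map_iso by (rule is_isoI)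
  finally show ?thesis using True by simp
next
  case False
  interpret odometer_factor p "p (k - 1)" k "shift_scale p k"
    using odometer_factor_shift_scale[OF p] False by simp
  have "seq_grp p k \<cong> wr_grp (shift_scale p k) (p (k - 1))"
    using projr_iso_inr_grp False by (auto simp: seq_grp_def intro: is_isoI)
  also have "\<dots> \<cong> aut_inf p\<lparr>carrier := aut_T_pow p (p (k - 1))\<rparr>"
    using wreath_map_iso by (rule is_isoI)
  finally show ?thesis using False by simp
qed

lemma seq_grp_mult_closed:
  assumes p: "dvd_chain p" and "x \<in> carrier (seq_grp p k)" "y \<in> carrier (seq_grp p k)"
  shows "x \<otimes>\<^bsub>seq_grp p k\<^esub> y \<in> carrier (seq_grp p k)"
proof (cases "k = 0")
  case True
  then show ?thesis
    using assms odo_add_closed[OF p] by (auto simp: seq_grp_def inl_grp_def odo_grp_def)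
next
  case False
  then interpret odometer_factor p "p (k - 1)" k "shift_scale p k"
    using odometer_factor_shift_scale[OF p] by simp
  show ?thesis
    using assms False wr_grp_mult_closed[OF q] by (auto simp: seq_grp_def inr_grp_def)
qed

theorem theorem3p5:
  fixes p :: "nat \<Rightarrow> nat"
  assumes "is_scale p"
  shows "\<exists>j. (\<forall>k. j k \<in> hom (seq_grp p k) (seq_grp p (Suc k)) \<and>
                   inj_on (j k) (carrier (seq_grp p k))) \<and>
             aut_inf p \<cong> dirlim (seq_grp p) j"
proof -
  have p: "dvd_chain p" using assms by (rule is_scale_imp_dvd_chain)
  let ?H = "\<lambda>k. aut_T_pow p (if k = 0 then 1 else p (k - 1))"
  show ?thesis
  proof (rule iso_dirlim_of_increasing_union)
    show "x \<otimes>\<^bsub>seq_grp p k\<^esub> y \<in> carrier (seq_grp p k)"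
      if "x \<in> carrier (seq_grp p k)" "y \<in> carrier (seq_grp p k)" for k x y
      using seq_grp_mult_closed[OF p that] .
    show "seq_grp p k \<cong> aut_inf p\<lparr>carrier := ?H k\<rparr>" for k
      using seq_grp_iso_aut_T_pow[OF p] .
    show "?H k \<subseteq> ?H (Suc k)" for k
      using aut_T_pow_mono[OF p] dvd_chain_dvd[OF p, of "k - 1" k] by simp
    show "carrier (aut_inf p) = (\<Union>k. ?H k)"
    proof
      show "carrier (aut_inf p) \<subseteq> (\<Union>k. ?H k)"
        using carrier_aut_inf_eq[OF p] by (force intro: exI[of _ "Suc _"])
    qed (auto simp: aut_T_pow_def)
  qed
qed

end
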